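(* Let $(A,\mathrm{cl})$ be a finite pregeometry with dimension function $d$. Let $X\subseteq A$ be a union of closed sets with $d(X)\ge 2$, and let $\mathcal F(X)$ be the set of closed sets $F$ of $A$ with $F\subsetneq X$. Then $\alpha(X)=-\Delta(\mathcal F(X))$.
   Context: For a pregeometry $(A,\mathrm{cl})$ with dimension function $d$, a closed set is $F$ with $\mathrm{cl}(F)=F$. If $\mathcal F=\{F_i:i\in I\}$ is a non-empty finite set of distinct finite-dimensional closed sets, put $F_S=\bigcap_{i\in S}F_i$ for $\emptyset\ne S\subseteq I$ and $F_\emptyset=\bigcup_{i\in I}F_i$, and define $\Delta(\mathcal F)=\sum_{S\subseteq I}(-1)^{|S|}d(F_S)$. For a finite pregeometry, the $\alpha$-function is defined on unions of closed sets $X$ recursively by $\alpha(X)=|X|-d(X)-\sum_G\alpha(G)$, the sum over closed $G\subsetneq X$. *)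

theory Defs
  imports Main
begin

text \<open>A pregeometry on the carrier set A with closure operator cl (only its
values on subsets of A matter).  Finite character is automatic since we only
consider finite carriers.\<close>

definition pregeometry :: "'a set \<Rightarrow> ('a set \<Rightarrow> 'a set) \<Rightarrow> bool" where
  "pregeometry A cl \<longleftrightarrow>
     (\<forall>X. X \<subseteq> A \<longrightarrow> X \<subseteq> cl X \<and> cl X \<subseteq> A) \<and>
     (\<forall>X Y. X \<subseteq> Y \<and> Y \<subseteq> A \<longrightarrow> cl X \<subseteq> cl Y) \<and>
     (\<forall>X. X \<subseteq> A \<longrightarrow> cl (cl X) = cl X) \<and>
     (\<forall>X a b. X \<subseteq> A \<and> a \<in> A \<and> b \<in> A \<and> a \<in> cl (insert b X) - cl X
         \<longrightarrow> b \<in> cl (insert a X)) \<and>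
     (\<forall>X a. X \<subseteq> A \<and> a \<in> cl X \<longrightarrow> (\<exists>X0. finite X0 \<and> X0 \<subseteq> X \<and> a \<in> cl X0))"

definition closed_set :: "'a set \<Rightarrow> ('a set \<Rightarrow> 'a set) \<Rightarrow> 'a set \<Rightarrow> bool" where
  "closed_set A cl F \<longleftrightarrow> F \<subseteq> A \<and> cl F = F"

definition dim :: "('a set \<Rightarrow> 'a set) \<Rightarrow> 'a set \<Rightarrow> nat" where
  "dim cl X = (LEAST n. \<exists>Y. Y \<subseteq> X \<and> X \<subseteq> cl Y \<and> finite Y \<and> card Y = n)"

definition union_of_closed :: "'a set \<Rightarrow> ('a set \<Rightarrow> 'a set) \<Rightarrow> 'a set \<Rightarrow> bool" where
  "union_of_closed A cl X \<longleftrightarrow> (\<exists>\<S>. (\<forall>F\<in>\<S>. closed_set A cl F) \<and> X = \<Union>\<S>)"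

function alpha :: "'a set \<Rightarrow> ('a set \<Rightarrow> 'a set) \<Rightarrow> 'a set \<Rightarrow> int" where
  "alpha A cl X = int (card X) - int (dim cl X)
     - (if finite X then (\<Sum>G\<in>{G. closed_set A cl G \<and> G \<subset> X}. alpha A cl G) else 0)"
  by auto
termination
  by (relation "measure (\<lambda>(A, cl, X). card X)") (auto intro: psubset_card_mono)

definition Delta :: "('a set \<Rightarrow> 'a set) \<Rightarrow> 'a set set \<Rightarrow> int" where
  "Delta cl \<F> = (\<Sum>S\<in>Pow \<F>. (-1) ^ card S *
       int (dim cl (if S = {} then \<Union>\<F> else \<Inter>S)))"

end

theory Submission
  imports Defs
begin

(* Let FF be the family of closed proper subsets of X and write N for the
   nonempty subfamilies of FF.  The proof combines three identities.
   (1) Every point x of X lies in cl {x}, a closed set of dimension at most 1,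
       hence in a member of FF; so the union of FF is X, and inclusion-exclusion
       expresses card X through the cardinalities of the intersections over N.
   (2) Intersections of closed sets are closed, so for S in N the set
       (Inter S) lies in FF, and unfolding alpha gives
       d(Inter S) = card (Inter S) - (sum of alpha H over H in FF, H <= Inter S).
   (3) For fixed H in FF, the alternating sum over those S in N with
       H <= Inter S is -1 (they are the nonempty subfamilies of the members of
       FF above H).
   Substituting (2) into Delta and exchanging the sums with (3) and (1) leaves
   d(X) - card X + (sum of alpha over FF), which is -alpha(X) by definition. *)

declare alpha.simps[simp del]

lemma
  assumes "pregeometry A cl"
  shows cl_extensive: "Y \<subseteq> A \<Longrightarrow> Y \<subseteq> cl Y"
    and cl_subset_carrier: "Y \<subseteq> A \<Longrightarrow> cl Y \<subseteq> A"
    and cl_mono: "Y \<subseteq> Z \<Longrightarrow> Z \<subseteq> A \<Longrightarrow> cl Y \<subseteq> cl Z"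
    and cl_idem: "Y \<subseteq> A \<Longrightarrow> cl (cl Y) = cl Y"
proof -
  note axioms = assms[unfolded pregeometry_def]
  have ext: "\<forall>X. X \<subseteq> A \<longrightarrow> X \<subseteq> cl X \<and> cl X \<subseteq> A"
    using axioms by (rule conjunct1)
  have mono: "\<forall>X Y. X \<subseteq> Y \<and> Y \<subseteq> A \<longrightarrow> cl X \<subseteq> cl Y"
    using axioms by (rule conjunct1[OF conjunct2])
  have idem: "\<forall>X. X \<subseteq> A \<longrightarrow> cl (cl X) = cl X"
    using axioms by (rule conjunct1[OF conjunct2[OF conjunct2]])
  show "Y \<subseteq> A \<Longrightarrow> Y \<subseteq> cl Y" and "Y \<subseteq> A \<Longrightarrow> cl Y \<subseteq> A"
    using ext by simp_all
  show "Y \<subseteq> Z \<Longrightarrow> Z \<subseteq> A \<Longrightarrow> cl Y \<subseteq> cl Z"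
    using mono by simp
  show "Y \<subseteq> A \<Longrightarrow> cl (cl Y) = cl Y"
    using idem by simp
qed

lemma closed_set_Inter:
  assumes pg: "pregeometry A cl" and "S \<noteq> {}" and closed: "\<And>F. F \<in> S \<Longrightarrow> closed_set A cl F"
  shows "closed_set A cl (\<Inter>S)"
proof -
  have sub: "\<Inter>S \<subseteq> A"
    using assms(2) closed unfolding closed_set_def by blast
  have "cl (\<Inter>S) \<subseteq> F" if "F \<in> S" for F
    using cl_mono[OF pg, of "\<Inter>S" F] closed[OF that] that unfolding closed_set_def by blast
  then have "cl (\<Inter>S) \<subseteq> \<Inter>S" by blast
  with cl_extensive[OF pg sub] sub show ?thesis
    unfolding closed_set_def by blast
qed

lemma dim_cl_singleton:
  assumes "pregeometry A cl" "x \<in> A"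
  shows "dim cl (cl {x}) \<le> 1"
proof -
  have "\<exists>Y. Y \<subseteq> cl {x} \<and> cl {x} \<subseteq> cl Y \<and> finite Y \<and> card Y = 1"
    using cl_extensive[OF assms(1), of "{x}"] assms(2) by (intro exI[of _ "{x}"]) auto
  then show ?thesis unfolding dim_def by (rule Least_le)
qed

text \<open>A union of closed sets of dimension at least two is covered by its closed
  proper subsets: each point lies in its own closure, which has dimension at
  most one.\<close>

lemma Union_closed_proper_subsets:
  assumes pg: "pregeometry A cl" and X: "union_of_closed A cl X" and "dim cl X \<ge> 2"
  shows "\<Union>{F. closed_set A cl F \<and> F \<subset> X} = X"
proof (intro equalityI subsetI)
  fix x assume "x \<in> X"
  then obtain F where F: "closed_set A cl F" "F \<subseteq> X" "x \<in> F"
    using X unfolding union_of_closed_def by blast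
  then have xA: "x \<in> A" and FA: "F \<subseteq> A" "cl F = F"
    unfolding closed_set_def by auto
  have "cl {x} \<subseteq> X"
    using cl_mono[OF pg, of "{x}" F] F FA by auto
  moreover have "cl {x} \<noteq> X"
    using dim_cl_singleton[OF pg xA] \<open>dim cl X \<ge> 2\<close> by auto
  moreover have "closed_set A cl (cl {x})"
    using cl_idem[OF pg] cl_subset_carrier[OF pg] xA unfolding closed_set_def by simp
  moreover have "x \<in> cl {x}"
    using cl_extensive[OF pg, of "{x}"] xA by simp
  ultimately show "x \<in> \<Union>{F. closed_set A cl F \<and> F \<subset> X}" by blast
qed auto

lemma alpha_closed_sum:
  assumes "finite A" "closed_set A cl G"
  shows "int (dim cl G) = int (card G) - (\<Sum>H\<in>{H. closed_set A cl H \<and> H \<subseteq> G}. alpha A cl H)"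
proof -
  have finG: "finite G"
    using assms finite_subset unfolding closed_set_def by blast
  have fin: "finite {H. closed_set A cl H \<and> H \<subset> G}"
    by (rule finite_subset[of _ "Pow A"]) (auto simp: closed_set_def assms(1))
  have "{H. closed_set A cl H \<and> H \<subseteq> G} = insert G {H. closed_set A cl H \<and> H \<subset> G}"
    using assms(2) by auto
  then show ?thesis
    using alpha.simps[of A cl G] finG fin by simp
qed

lemma sum_nonempty_subsets_alternating:
  assumes "finite U" "U \<noteq> {}"
  shows "(\<Sum>S\<in>Pow U - {{}}. (-1::int) ^ card S) = -1"
proof -
  have "card {S\<in>Pow U. even (card S)} = card {S\<in>Pow U. odd (card S)}"
    using card_subsupersets_even_odd[of U "{}"] assms by auto
  then have "(\<Sum>S\<in>Pow U. (-1::int) ^ card S) = 0"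
    using sum_alternating_cancels[of "Pow U" card] assms by simp
  moreover have "(\<Sum>S\<in>Pow U. (-1::int) ^ card S) = 1 + (\<Sum>S\<in>Pow U - {{}}. (-1) ^ card S)"
    using assms by (subst sum.remove[of _ "{}"]) auto
  ultimately show ?thesis by simp
qed

lemma alternating_sum_below_Inter:
  fixes FF :: "'a set set" and w :: "'a set \<Rightarrow> int"
  assumes "finite FF"
  shows "(\<Sum>S | S \<subseteq> FF \<and> S \<noteq> {}. (-1) ^ card S * (\<Sum>H | H \<in> FF \<and> H \<subseteq> \<Inter>S. w H))
           = - (\<Sum>H\<in>FF. w H)"
proof -
  let ?N = "{S. S \<subseteq> FF \<and> S \<noteq> {}}"
  have finN: "finite ?N" using assms by simp
  have "(\<Sum>S\<in>?N. (-1) ^ card S * (\<Sum>H | H \<in> FF \<and> H \<subseteq> \<Inter>S. w H))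
      = (\<Sum>S\<in>?N. \<Sum>H\<in>FF. if H \<subseteq> \<Inter>S then (-1) ^ card S * w H else 0)"
    by (simp add: sum_distrib_left sum.inter_filter[OF assms] if_distrib cong: if_cong)
  also have "\<dots> = (\<Sum>H\<in>FF. \<Sum>S\<in>?N. if H \<subseteq> \<Inter>S then (-1) ^ card S * w H else 0)"
    by (rule sum.swap)
  also have "\<dots> = (\<Sum>H\<in>FF. - w H)"
  proof (rule sum.cong[OF refl])
    fix H assume H: "H \<in> FF"
    define U where "U = {F\<in>FF. H \<subseteq> F}"
    have U: "finite U" "U \<noteq> {}" using H assms by (auto simp: U_def)
    have "{S\<in>?N. H \<subseteq> \<Inter>S} = Pow U - {{}}" by (auto simp: U_def)
    then have "(\<Sum>S\<in>?N. if H \<subseteq> \<Inter>S then (-1) ^ card S * w H else 0)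
        = (\<Sum>S\<in>Pow U - {{}}. (-1::int) ^ card S) * w H"
      using finN by (simp add: sum.inter_filter[symmetric] sum_distrib_right)
    then show "(\<Sum>S\<in>?N. if H \<subseteq> \<Inter>S then (-1) ^ card S * w H else 0) = - w H"
      using sum_nonempty_subsets_alternating[OF U] by simp
  qed
  finally show ?thesis by (simp add: sum_negf)
qed

lemma Delta_split:
  assumes "finite FF"
  shows "Delta cl FF = int (dim cl (\<Union>FF))
           + (\<Sum>S | S \<subseteq> FF \<and> S \<noteq> {}. (-1) ^ card S * int (dim cl (\<Inter>S)))"
proof -
  have "Pow FF = insert {} {S. S \<subseteq> FF \<and> S \<noteq> {}}" by auto
  moreover have "(\<Sum>S | S \<subseteq> FF \<and> S \<noteq> {}. (-1) ^ card S * int (dim cl (if S = {} then \<Union>FF else \<Inter>S)))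
      = (\<Sum>S | S \<subseteq> FF \<and> S \<noteq> {}. (-1) ^ card S * int (dim cl (\<Inter>S)))"
    by (rule sum.cong) auto
  ultimately show ?thesis
    unfolding Delta_def using assms by simp
qed

theorem lemma4p2:
  fixes A :: "'a set" and cl :: "'a set \<Rightarrow> 'a set" and X :: "'a set"
  assumes "finite A"
    and "pregeometry A cl"
    and "union_of_closed A cl X"
    and "dim cl X \<ge> 2"
  shows "alpha A cl X = - Delta cl {F. closed_set A cl F \<and> F \<subset> X}"
proof -
  define FF where "FF = {F. closed_set A cl F \<and> F \<subset> X}"
  let ?N = "{S. S \<subseteq> FF \<and> S \<noteq> {}}"
  have finFF: "finite FF"
    by (rule finite_subset[of _ "Pow A"]) (auto simp: FF_def closed_set_def assms(1))
  have UFF: "\<Union>FF = X"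
    using Union_closed_proper_subsets[OF assms(2-4)] by (simp add: FF_def)
  have finX: "finite X"
    using assms(1) UFF finite_subset[of X A] unfolding FF_def closed_set_def by blast
  have dim_Inter: "int (dim cl (\<Inter>S)) = int (card (\<Inter>S)) - (\<Sum>H | H \<in> FF \<and> H \<subseteq> \<Inter>S. alpha A cl H)"
    if S: "S \<in> ?N" for S
  proof -
    have closed: "closed_set A cl (\<Inter>S)"
      using closed_set_Inter[OF assms(2)] S by (auto simp: FF_def)
    have "\<Inter>S \<subset> X" using S by (auto simp: FF_def)
    then have "{H. closed_set A cl H \<and> H \<subseteq> \<Inter>S} = {H. H \<in> FF \<and> H \<subseteq> \<Inter>S}"
      by (auto simp: FF_def)
    with alpha_closed_sum[OF assms(1) closed] show ?thesis by simp
  qed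
  have fin_members: "finite F" if "F \<in> FF" for F
    using that finX finite_subset unfolding FF_def by blast
  have incl_excl: "int (card X) = - (\<Sum>S\<in>?N. (-1) ^ card S * int (card (\<Inter>S)))"
    using int_card_UNION[OF finFF fin_members] UFF by (simp add: sum_negf[symmetric])
  have dim_Inters: "(\<Sum>S\<in>?N. (-1) ^ card S * int (dim cl (\<Inter>S)))
      = (\<Sum>S\<in>?N. (-1) ^ card S * int (card (\<Inter>S)))
        - (\<Sum>S\<in>?N. (-1) ^ card S * (\<Sum>H | H \<in> FF \<and> H \<subseteq> \<Inter>S. alpha A cl H))"
    unfolding sum_subtractf[symmetric]
    by (rule sum.cong) (simp_all add: dim_Inter right_diff_distrib del: mem_Collect_eq)
  have "Delta cl FF = int (dim cl X) + (\<Sum>S\<in>?N. (-1) ^ card S * int (card (\<Inter>S)))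
        - (\<Sum>S\<in>?N. (-1) ^ card S * (\<Sum>H | H \<in> FF \<and> H \<subseteq> \<Inter>S. alpha A cl H))"
    using Delta_split[OF finFF, of cl] UFF dim_Inters by simp
  also have "\<dots> = int (dim cl X) - int (card X) + (\<Sum>H\<in>FF. alpha A cl H)"
    using incl_excl alternating_sum_below_Inter[OF finFF] by simp
  also have "\<dots> = - alpha A cl X"
    using alpha.simps[of A cl X] finX unfolding FF_def by simp
  finally show ?thesis unfolding FF_def by simp
qed

end
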